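(* Let $\lambda\in\mathbb{Z}_2$ and consider $f(x)=x^2-\lambda$ as a map $\mathbb{Z}_2\to\mathbb{Z}_2$. 1) If $\lambda\equiv 0\pmod 4$, then $f$ has two attracting fixed points, one in $4\mathbb{Z}_2$ with attracting basin $2\mathbb{Z}_2$, and the other in $1+4\mathbb{Z}_2$ with attracting basin $1+2\mathbb{Z}_2$. 2) If $\lambda\equiv 1\pmod 4$, then all of $\mathbb{Z}_2$ is attracted into a periodic orbit of period $2$ with one orbit point in $4\mathbb{Z}_2$ and the other in $3+4\mathbb{Z}_2$. 3) If $\lambda\equiv 2\pmod 4$, then $f$ has two attracting fixed points, one in $2+4\mathbb{Z}_2$ with attracting basin $2\mathbb{Z}_2$, and the other in $3+4\mathbb{Z}_2$ with attracting basin $1+2\mathbb{Z}_2$. 4) If $\lambda\equiv 3\pmod 4$, then all of $\mathbb{Z}_2$ is attracted into a periodic orbit of period $2$ with one orbit point in $1+4\mathbb{Z}_2$ and the other in $2+4\mathbb{Z}_2$.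
   Context: A point $x$ is attracted into a periodic orbit $O$ (or lies in its attracting basin) if the distance from $f^n(x)$ to $O$ tends to $0$ as $n\to\infty$; a fixed point is attracting if it has an open neighbourhood contained in its basin. *)

theory Defs
  imports Complex_Main
begin

text \<open>The ring of 2-adic integers, modelled as the inverse limit of the rings Z/2^n Z:
  an element is a compatible sequence of residues x n in {0..<2^n}.\<close>

typedef z2 = "{x :: nat \<Rightarrow> int. \<forall>n. x n = x (Suc n) mod 2 ^ n}"
  morphisms digits Abs_z2
  by (rule exI[of _ "\<lambda>_. 0"]) simp

definition z2_of_int :: "int \<Rightarrow> z2" where
  "z2_of_int k = Abs_z2 (\<lambda>n. k mod 2 ^ n)"

definition z2_add :: "z2 \<Rightarrow> z2 \<Rightarrow> z2" where
  "z2_add x y = Abs_z2 (\<lambda>n. (digits x n + digits y n) mod 2 ^ n)"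

definition z2_diff :: "z2 \<Rightarrow> z2 \<Rightarrow> z2" where
  "z2_diff x y = Abs_z2 (\<lambda>n. (digits x n - digits y n) mod 2 ^ n)"

definition z2_mult :: "z2 \<Rightarrow> z2 \<Rightarrow> z2" where
  "z2_mult x y = Abs_z2 (\<lambda>n. (digits x n * digits y n) mod 2 ^ n)"

text \<open>2-adic distance: |x - y|_2 = 2^(-v) where v is the 2-adic valuation of x - y,
  i.e. the largest v with x = y (mod 2^v).\<close>
definition z2_dist :: "z2 \<Rightarrow> z2 \<Rightarrow> real" where
  "z2_dist x y = (if x = y then 0
     else (1/2) ^ (LEAST n. digits x (Suc n) \<noteq> digits y (Suc n)))"

definition z2_class :: "int \<Rightarrow> nat \<Rightarrow> z2 set" where
  "z2_class a m = {x. digits x m = a mod 2 ^ m}"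

definition z2_setdist :: "z2 \<Rightarrow> z2 set \<Rightarrow> real" where
  "z2_setdist x Orb = Min ((\<lambda>p. z2_dist x p) ` Orb)"

definition attracted :: "(z2 \<Rightarrow> z2) \<Rightarrow> z2 set \<Rightarrow> z2 \<Rightarrow> bool" where
  "attracted f Orb x \<longleftrightarrow> (\<lambda>n. z2_setdist ((f ^^ n) x) Orb) \<longlonglongrightarrow> 0"

definition basin :: "(z2 \<Rightarrow> z2) \<Rightarrow> z2 set \<Rightarrow> z2 set" where
  "basin f Orb = {x. attracted f Orb x}"

definition attracting_fixed_point :: "(z2 \<Rightarrow> z2) \<Rightarrow> z2 \<Rightarrow> bool" where
  "attracting_fixed_point f p \<longleftrightarrow> f p = p \<and>
     (\<exists>U. (\<forall>y\<in>U. \<exists>e>0. \<forall>z. z2_dist z y < e \<longrightarrow> z \<in> U) \<and> p \<in> U \<and> U \<subseteq> basin f {p})"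

definition period2_orbit :: "(z2 \<Rightarrow> z2) \<Rightarrow> z2 \<Rightarrow> z2 \<Rightarrow> bool" where
  "period2_orbit f a b \<longleftrightarrow> f a = b \<and> f b = a \<and> a \<noteq> b"

end

theory Submission
  imports Defs
begin

text \<open>Squaring shrinks 2-adic differences: if x \<equiv> y (mod 2^k) with k \<ge> 1 then x + y is even,
  so x^2 - y^2 = (x - y)(x + y) \<equiv> 0 (mod 2^(k+1)). Hence x \<mapsto> x^2 - \<lambda> gains one binary digit of
  agreement per step, and its iterates (or those of its square) converge on each parity class.
  If \<lambda> is even the map preserves parity, giving one attracting fixed point per parity class;
  if \<lambda> is odd it swaps parities, so its square has a fixed point in each class and these form
  a globally attracting 2-cycle. Reducing x^2 - \<lambda> modulo 4 locates the points.\<close>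

lemma digits_compat: "digits x n = digits x (Suc n) mod 2 ^ n"
  using digits[of x] by blast

lemma digits_bounds: "0 \<le> digits x n \<and> digits x n < 2 ^ n"
  using digits_compat[of x n] by simp

lemma digits_mod_self: "digits x n mod 2 ^ n = digits x n"
  using digits_bounds[of x n] by simp

lemma digits_0: "digits x 0 = 0"
  using digits_bounds[of x 0] by simp

lemma digits_mod_power: "m \<le> n \<Longrightarrow> digits x m = digits x n mod 2 ^ m"
proof (induction n)
  case 0
  then show ?case using digits_mod_self[of x 0] by simp
next
  case (Suc n)
  show ?case
  proof (cases "m \<le> n")
    case True
    have "digits x m = (digits x (Suc n) mod 2 ^ n) mod 2 ^ m"
      using Suc True digits_compat by metis
    also have "\<dots> = digits x (Suc n) mod 2 ^ m"
      by (rule mod_mod_cancel) (simp add: True le_imp_power_dvd)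
    finally show ?thesis .
  next
    case False
    then show ?thesis using Suc digits_mod_self[of x m] by (simp add: le_Suc_eq)
  qed
qed

lemma digits_eq_le: "digits x n = digits y n \<Longrightarrow> m \<le> n \<Longrightarrow> digits x m = digits y m"
  using digits_mod_power by metis

lemma digits_parity_cases: "digits x 1 = 0 \<or> digits x 1 = 1"
  using digits_bounds[of x 1] by auto

lemma digits_1_eq_mod_2: "digits x 1 = digits x 2 mod 2"
  using digits_mod_power[of 1 2 x] by simp

lemma z2_eqI:
  assumes "\<And>n. digits x (Suc (Suc n)) = digits y (Suc (Suc n))"
  shows "x = y"
proof -
  have "digits x n = digits y n" for n
    using digits_eq_le[OF assms[of n], of n] by simp
  then show ?thesis using digits_inject by blast
qed

lemma digits_Abs_z2: "(\<forall>n. g n = g (Suc n) mod 2 ^ n) \<Longrightarrow> digits (Abs_z2 g) = g"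
  by (intro Abs_z2_inverse CollectI)

lemma digits_Abs_z2_mod:
  assumes "\<And>a b n. (op a b) mod 2 ^ n = (op (a mod 2 ^ n) (b mod 2 ^ n)) mod (2::int) ^ n"
  shows "digits (Abs_z2 (\<lambda>n. op (digits x n) (digits y n) mod 2 ^ n)) n
       = op (digits x n) (digits y n) mod 2 ^ n"
proof -
  have "op (digits x n) (digits y n) mod 2 ^ n
      = (op (digits x (Suc n)) (digits y (Suc n)) mod 2 ^ Suc n) mod 2 ^ n" for n
    using assms[of "digits x (Suc n)" "digits y (Suc n)" n] digits_compat[of x n]
      digits_compat[of y n] mod_mod_cancel[OF le_imp_power_dvd[of n "Suc n" "2::int"]]
    by simp
  then show ?thesis by (subst digits_Abs_z2) auto
qed

lemma digits_z2_mult: "digits (z2_mult x y) n = (digits x n * digits y n) mod 2 ^ n"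
  unfolding z2_mult_def by (rule digits_Abs_z2_mod) (simp add: mod_mult_eq)

lemma digits_z2_diff: "digits (z2_diff x y) n = (digits x n - digits y n) mod 2 ^ n"
  unfolding z2_diff_def by (rule digits_Abs_z2_mod) (simp add: mod_diff_eq)

lemma digits_z2_of_int: "digits (z2_of_int k) n = k mod 2 ^ n"
proof -
  have "\<forall>n. k mod 2 ^ n = (k mod 2 ^ Suc n) mod (2::int) ^ n"
    by (intro allI mod_mod_cancel[symmetric]) (simp add: le_imp_power_dvd)
  then show ?thesis unfolding z2_of_int_def by (subst digits_Abs_z2) auto
qed

lemma z2_class_1: "c \<in> {0, 1} \<Longrightarrow> z2_class c 1 = {x. digits x 1 = c}"
  unfolding z2_class_def by auto

lemma z2_class_2: "x \<in> z2_class a 2 \<longleftrightarrow> digits x 2 = a mod 4"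
  unfolding z2_class_def by simp

lemma z2_dist_nonneg: "0 \<le> z2_dist x y"
  unfolding z2_dist_def by simp

lemma z2_dist_le_if_digits_eq:
  assumes "digits x k = digits y k"
  shows "z2_dist x y \<le> (1/2) ^ k"
proof (cases "x = y")
  case True
  then show ?thesis by (simp add: z2_dist_def)
next
  case False
  then obtain m where "digits x m \<noteq> digits y m"
    using digits_inject by blast
  with digits_0 obtain j where "digits x (Suc j) \<noteq> digits y (Suc j)"
    by (metis not0_implies_Suc)
  define L where "L = (LEAST j. digits x (Suc j) \<noteq> digits y (Suc j))"
  have "digits x (Suc L) \<noteq> digits y (Suc L)"
    unfolding L_def by (rule LeastI) fact
  then have "k \<le> L"
    using digits_eq_le[OF assms, of "Suc L"] by (metis not_less_eq_eq)
  then have "((1::real)/2) ^ L \<le> (1/2) ^ k" by (rule power_decreasing) auto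
  then show ?thesis using False unfolding z2_dist_def L_def by simp
qed

lemma z2_dist_eq_1_if_parity_differs:
  assumes "digits x 1 \<noteq> digits y 1"
  shows "z2_dist x y = 1"
proof -
  have "(LEAST n. digits x (Suc n) \<noteq> digits y (Suc n)) = 0"
    using assms by (intro Least_eq_0) simp
  then show ?thesis using assms unfolding z2_dist_def by auto
qed

lemma attractedI:
  assumes "finite Orb"
    and agree: "\<And>n. \<exists>q\<in>Orb. digits ((f ^^ n) x) (Suc n) = digits q (Suc n)"
  shows "attracted f Orb x"
proof -
  define s where "s n = z2_setdist ((f ^^ n) x) Orb" for n
  have "Orb \<noteq> {}" using agree[of 0] by blast
  then have s_nonneg: "0 \<le> s n" for n
    unfolding s_def z2_setdist_def using \<open>finite Orb\<close> z2_dist_nonneg by (simp add: Min_ge_iff)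
  have s_le: "s n \<le> (1/2) ^ Suc n" for n
  proof -
    obtain q where q: "q \<in> Orb" "digits ((f ^^ n) x) (Suc n) = digits q (Suc n)"
      using agree by blast
    have "s n \<le> z2_dist ((f ^^ n) x) q"
      unfolding s_def z2_setdist_def using \<open>finite Orb\<close> q(1) by (intro Min_le) auto
    also have "\<dots> \<le> (1/2) ^ Suc n" using z2_dist_le_if_digits_eq[OF q(2)] .
    finally show ?thesis .
  qed
  have "(\<lambda>n. ((1::real)/2) ^ Suc n) \<longlonglongrightarrow> 0"
    using LIMSEQ_Suc[OF LIMSEQ_power_zero[of "(1::real)/2"]] by simp
  then have "s \<longlonglongrightarrow> 0"
    by (rule tendsto_sandwich[rotated 2, OF tendsto_const]) (use s_nonneg s_le in auto)
  then show ?thesis unfolding attracted_def s_def by simp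
qed

lemma not_attracted_if_parity_differs:
  assumes "\<And>n. digits ((f ^^ n) x) 1 \<noteq> digits p 1"
  shows "\<not> attracted f {p} x"
proof
  assume "attracted f {p} x"
  then have "(\<lambda>n. z2_dist ((f ^^ n) x) p) \<longlonglongrightarrow> 0"
    unfolding attracted_def z2_setdist_def by simp
  moreover have "(\<lambda>n. z2_dist ((f ^^ n) x) p) = (\<lambda>n. 1)"
    using z2_dist_eq_1_if_parity_differs assms by auto
  ultimately show False by (simp add: LIMSEQ_const_iff)
qed

section \<open>Digit-contracting maps\<close>

definition z2_contracting :: "(z2 \<Rightarrow> z2) \<Rightarrow> bool" where
  "z2_contracting g \<longleftrightarrow>
     (\<forall>x y k. 1 \<le> k \<longrightarrow> digits x k = digits y k \<longrightarrow> digits (g x) (Suc k) = digits (g y) (Suc k))"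

lemma z2_contracting_funpow_digits:
  assumes "z2_contracting g" "1 \<le> k" "digits x k = digits y k"
  shows "digits ((g ^^ n) x) (k + n) = digits ((g ^^ n) y) (k + n)"
proof (induction n)
  case 0
  then show ?case using assms(3) by simp
next
  case (Suc n)
  have "1 \<le> k + n" using assms(2) by simp
  then have "digits (g ((g ^^ n) x)) (Suc (k + n)) = digits (g ((g ^^ n) y)) (Suc (k + n))"
    using assms(1) Suc.IH unfolding z2_contracting_def by blast
  then show ?case by simp
qed

lemma z2_contracting_funpow_2:
  assumes "z2_contracting g"
  shows "z2_contracting (g ^^ 2)"
  unfolding z2_contracting_def
proof (intro allI impI)
  fix x y and k :: nat
  assume "1 \<le> k" "digits x k = digits y k"
  then have "digits ((g ^^ 2) x) (k + 2) = digits ((g ^^ 2) y) (k + 2)"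
    using z2_contracting_funpow_digits[OF assms] by blast
  then show "digits ((g ^^ 2) x) (Suc k) = digits ((g ^^ 2) y) (Suc k)"
    by (rule digits_eq_le) simp
qed

text \<open>The first n digits of g^n(x0) never change again; together they define the fixed point.\<close>

lemma z2_contracting_fixed_point:
  assumes g: "z2_contracting g" and x0: "digits (g x0) 1 = digits x0 1"
  shows "\<exists>p. g p = p \<and> digits p 1 = digits x0 1"
proof -
  have stable: "digits ((g ^^ Suc n) x0) (Suc n) = digits ((g ^^ n) x0) (Suc n)" for n
    using z2_contracting_funpow_digits[OF g _ x0, of n]
    by (simp add: funpow_Suc_right del: funpow.simps)
  define d where "d n = digits ((g ^^ n) x0) n" for n
  have "d n = d (Suc n) mod 2 ^ n" for n
  proof -
    have "d (Suc n) mod 2 ^ n = digits ((g ^^ Suc n) x0) n"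
      unfolding d_def by (rule digits_mod_power[symmetric]) simp
    also have "\<dots> = d n"
      unfolding d_def by (rule digits_eq_le[OF stable]) simp
    finally show ?thesis by simp
  qed
  then have digits_p: "digits (Abs_z2 d) = d" by (intro digits_Abs_z2 allI)
  have "g (Abs_z2 d) = Abs_z2 d"
  proof (rule z2_eqI)
    fix n
    have "digits (Abs_z2 d) (Suc n) = digits ((g ^^ Suc n) x0) (Suc n)"
      using digits_p by (simp add: d_def)
    moreover have "1 \<le> Suc n" by simp
    ultimately have "digits (g (Abs_z2 d)) (Suc (Suc n)) = digits (g ((g ^^ Suc n) x0)) (Suc (Suc n))"
      using g unfolding z2_contracting_def by blast
    then show "digits (g (Abs_z2 d)) (Suc (Suc n)) = digits (Abs_z2 d) (Suc (Suc n))"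
      using digits_p by (simp add: d_def)
  qed
  moreover have "digits (Abs_z2 d) 1 = digits x0 1"
    using digits_p x0 by (simp add: d_def)
  ultimately show ?thesis by blast
qed

lemma z2_contracting_attracted_to_orbit:
  assumes g: "z2_contracting g" and "finite Orb" and "g ` Orb \<subseteq> Orb"
    and y: "y \<in> Orb" "digits x 1 = digits y 1"
  shows "attracted g Orb x"
proof (rule attractedI[OF \<open>finite Orb\<close>])
  fix n
  have "(g ^^ n) y \<in> Orb"
    using \<open>g ` Orb \<subseteq> Orb\<close> y(1) by (induction n) auto
  moreover have "digits ((g ^^ n) x) (Suc n) = digits ((g ^^ n) y) (Suc n)"
    using z2_contracting_funpow_digits[OF g _ y(2), of n] by simp
  ultimately show "\<exists>q\<in>Orb. digits ((g ^^ n) x) (Suc n) = digits q (Suc n)" by blast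
qed

lemma z2_contracting_attracting_fixed_point:
  assumes g: "z2_contracting g" and parity: "\<And>x. digits (g x) 1 = digits x 1"
    and c: "c \<in> {0, 1}"
  shows "\<exists>p. attracting_fixed_point g p \<and> digits p 1 = c \<and> basin g {p} = z2_class c 1"
proof -
  have "digits (z2_of_int c) 1 = c" using c by (auto simp: digits_z2_of_int)
  then obtain p where p: "g p = p" "digits p 1 = c"
    using z2_contracting_fixed_point[OF g parity, of "z2_of_int c"] by auto
  have parity_iter: "digits ((g ^^ n) x) 1 = digits x 1" for n x
  proof (induction n)
    case (Suc n)
    then show ?case using parity[of "(g ^^ n) x"] by simp
  qed simp
  have parity_class: "z2_class c 1 = {x. digits x 1 = digits p 1}"
    using z2_class_1[OF c] p(2) by simp
  have basin: "basin g {p} = z2_class c 1"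
  proof (intro set_eqI iffI)
    fix x
    assume "x \<in> basin g {p}"
    then have "attracted g {p} x" unfolding basin_def by simp
    then have "digits x 1 = digits p 1"
      using not_attracted_if_parity_differs[of g x p] parity_iter by metis
    then show "x \<in> z2_class c 1" unfolding parity_class by simp
  next
    fix x
    assume "x \<in> z2_class c 1"
    then have "digits x 1 = digits p 1" unfolding parity_class by simp
    then have "attracted g {p} x"
      using z2_contracting_attracted_to_orbit[OF g, of "{p}" p x] p(1) by simp
    then show "x \<in> basin g {p}" unfolding basin_def by simp
  qed
  have "attracting_fixed_point g p"
    unfolding attracting_fixed_point_def
  proof (intro conjI exI[of _ "z2_class c 1"] ballI exI[of _ "1::real"] allI impI)
    show "p \<in> z2_class c 1" unfolding parity_class by simp
    show "z2_class c 1 \<subseteq> basin g {p}" using basin by simp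
    show "z \<in> z2_class c 1" if "y \<in> z2_class c 1" "z2_dist z y < 1" for y z
    proof -
      have "digits z 1 = digits y 1"
        using that(2) z2_dist_eq_1_if_parity_differs[of z y]
        by (cases "digits z 1 = digits y 1") auto
      then show ?thesis using that(1) unfolding parity_class by simp
    qed
  qed (simp_all add: p(1))
  with p basin show ?thesis by blast
qed

lemma z2_contracting_attracting_2_cycle:
  assumes g: "z2_contracting g" and swap: "\<And>x. digits (g x) 1 = 1 - digits x 1"
    and c: "c \<in> {0, 1}"
  shows "\<exists>a b. period2_orbit g a b \<and> digits a 1 = c \<and> (\<forall>x. attracted g {a, b} x)"
proof -
  have g2: "(g ^^ 2) x = g (g x)" for x by (simp add: numeral_2_eq_2)
  have parity2: "digits ((g ^^ 2) x) 1 = digits x 1" for x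
    unfolding g2 swap by simp
  have "digits (z2_of_int c) 1 = c" using c by (auto simp: digits_z2_of_int)
  then obtain a where a2: "(g ^^ 2) a = a" and a: "digits a 1 = c"
    using z2_contracting_fixed_point[OF z2_contracting_funpow_2[OF g] parity2] by metis
  from a2 have aa: "g (g a) = a" unfolding g2 .
  have b: "digits (g a) 1 = 1 - c" using swap a by simp
  then have "period2_orbit g a (g a)"
    unfolding period2_orbit_def using aa a c by auto
  moreover have "attracted g {a, g a} x" for x
  proof -
    have "digits x 1 = digits a 1 \<or> digits x 1 = digits (g a) 1"
      using a b c digits_parity_cases[of x] by auto
    then obtain y where "y \<in> {a, g a}" "digits x 1 = digits y 1" by blast
    moreover have "g ` {a, g a} \<subseteq> {a, g a}" using aa by auto
    ultimately show ?thesis by (intro z2_contracting_attracted_to_orbit[OF g]) auto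
  qed
  ultimately show ?thesis using a by blast
qed

section \<open>The quadratic map x^2 - \<lambda>\<close>

definition z2_sq_minus :: "z2 \<Rightarrow> z2 \<Rightarrow> z2" where
  "z2_sq_minus lam x = z2_diff (z2_mult x x) lam"

lemma digits_z2_sq_minus:
  "digits (z2_sq_minus lam x) n = (digits x n * digits x n - digits lam n) mod 2 ^ n"
  unfolding z2_sq_minus_def digits_z2_diff digits_z2_mult by (rule mod_diff_left_eq)

lemma z2_contracting_sq_minus: "z2_contracting (z2_sq_minus lam)"
  unfolding z2_contracting_def
proof (intro allI impI)
  fix x y and k :: nat
  assume "1 \<le> k" "digits x k = digits y k"
  define X where "X = digits x (Suc k)"
  define Y where "Y = digits y (Suc k)"
  have "X mod 2 ^ k = Y mod 2 ^ k"
    using \<open>digits x k = digits y k\<close> digits_compat unfolding X_def Y_def by metis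
  then have diff: "2 ^ k dvd X - Y" by (simp add: mod_eq_dvd_iff)
  have "(2::int) dvd 2 ^ k" using \<open>1 \<le> k\<close> by (simp add: dvd_power)
  then have "2 dvd X - Y" using diff by (rule dvd_trans)
  then have "2 dvd (X - Y) + 2 * Y" by (rule dvd_add) simp
  then have sum: "2 dvd X + Y" by simp
  have "2 ^ k * 2 dvd (X - Y) * (X + Y)" using diff sum by (rule mult_dvd_mono)
  moreover have "(X - Y) * (X + Y) = (X * X - digits lam (Suc k)) - (Y * Y - digits lam (Suc k))"
    by (simp add: algebra_simps)
  moreover have "(2::int) ^ Suc k = 2 ^ k * 2" by simp
  ultimately have "2 ^ Suc k dvd (X * X - digits lam (Suc k)) - (Y * Y - digits lam (Suc k))"
    by metis
  then show "digits (z2_sq_minus lam x) (Suc k) = digits (z2_sq_minus lam y) (Suc k)"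
    unfolding digits_z2_sq_minus X_def[symmetric] Y_def[symmetric] by (simp add: mod_eq_dvd_iff)
qed

lemma digits_z2_sq_minus_parity:
  "digits (z2_sq_minus lam x) 1 = (digits x 1 - digits lam 1) mod 2"
  unfolding digits_z2_sq_minus using digits_parity_cases[of x] by auto

lemma digits_z2_sq_minus_mod_4:
  "digits (z2_sq_minus lam x) 2 = (digits x 2 * digits x 2 - digits lam 2) mod 4"
  using digits_z2_sq_minus[of lam x 2] by simp

lemma digits_2_cases: "digits x 2 \<in> {0, 1, 2, 3}"
  using digits_bounds[of x 2] by auto

lemma sq_minus_attracting_fixed_points:
  assumes lam: "lam \<in> z2_class l 2" and l: "l \<in> {0, 2}"
  shows "\<exists>p q. attracting_fixed_point (z2_sq_minus lam) p \<and> p \<in> z2_class l 2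
      \<and> basin (z2_sq_minus lam) {p} = z2_class 0 1
      \<and> attracting_fixed_point (z2_sq_minus lam) q \<and> q \<in> z2_class (l + 1) 2
      \<and> basin (z2_sq_minus lam) {q} = z2_class 1 1"
proof -
  have lam2: "digits lam 2 = l" using lam l unfolding z2_class_2 by auto
  have "digits (z2_sq_minus lam x) 1 = digits x 1" for x
    using digits_z2_sq_minus_parity[of lam x] digits_1_eq_mod_2[of lam] lam2 l
      digits_parity_cases[of x] by auto
  note fixed = z2_contracting_attracting_fixed_point[OF z2_contracting_sq_minus this]
  have residue: "digits p 2 = (digits p 2 * digits p 2 - l) mod 4"
    if "attracting_fixed_point (z2_sq_minus lam) p" for p
  proof -
    from that have "z2_sq_minus lam p = p" unfolding attracting_fixed_point_def by simp
    then show ?thesis using digits_z2_sq_minus_mod_4[of lam p] lam2 by simp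
  qed
  obtain p q where
    p: "attracting_fixed_point (z2_sq_minus lam) p" "digits p 1 = 0"
      "basin (z2_sq_minus lam) {p} = z2_class 0 1" and
    q: "attracting_fixed_point (z2_sq_minus lam) q" "digits q 1 = 1"
      "basin (z2_sq_minus lam) {q} = z2_class 1 1"
    using fixed[of 0] fixed[of 1] by auto
  moreover have "p \<in> z2_class l 2"
    using residue[OF p(1)] p(2) digits_2_cases[of p] digits_1_eq_mod_2[of p] l
    unfolding z2_class_2 by auto
  moreover have "q \<in> z2_class (l + 1) 2"
    using residue[OF q(1)] q(2) digits_2_cases[of q] digits_1_eq_mod_2[of q] l
    unfolding z2_class_2 by auto
  ultimately show ?thesis by blast
qed

lemma sq_minus_attracting_2_cycle:
  assumes lam: "lam \<in> z2_class l 2" and l: "l \<in> {1, 3}"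
  shows "\<exists>a b. period2_orbit (z2_sq_minus lam) a b
      \<and> a \<in> z2_class (if l = 1 then 0 else 1) 2 \<and> b \<in> z2_class (if l = 1 then 3 else 2) 2
      \<and> (\<forall>x. attracted (z2_sq_minus lam) {a, b} x)"
proof -
  have lam2: "digits lam 2 = l" using lam l unfolding z2_class_2 by auto
  have "digits (z2_sq_minus lam x) 1 = 1 - digits x 1" for x
    using digits_z2_sq_minus_parity[of lam x] digits_1_eq_mod_2[of lam] lam2 l
      digits_parity_cases[of x] by auto
  moreover have "(if l = 1 then 0 else 1) \<in> {0, 1 :: int}" by simp
  ultimately obtain a b where ab: "period2_orbit (z2_sq_minus lam) a b"
      "digits a 1 = (if l = 1 then 0 else 1)" "\<forall>x. attracted (z2_sq_minus lam) {a, b} x"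
    using z2_contracting_attracting_2_cycle[OF z2_contracting_sq_minus] by blast
  from ab(1) have "z2_sq_minus lam a = b" "z2_sq_minus lam b = a"
    unfolding period2_orbit_def by simp_all
  then have b_res: "digits b 2 = (digits a 2 * digits a 2 - l) mod 4"
      and a_res: "digits a 2 = (digits b 2 * digits b 2 - l) mod 4"
    using digits_z2_sq_minus_mod_4[of lam a] digits_z2_sq_minus_mod_4[of lam b] lam2 by simp_all
  have "digits b 2 = (if l = 1 then 3 else 2)"
    using b_res ab(2) l digits_2_cases[of a] digits_1_eq_mod_2[of a] by auto
  moreover from this have "digits a 2 = (if l = 1 then 0 else 1)"
    using a_res l by auto
  ultimately have "a \<in> z2_class (if l = 1 then 0 else 1) 2" "b \<in> z2_class (if l = 1 then 3 else 2) 2"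
    unfolding z2_class_2 by auto
  with ab show ?thesis by blast
qed

theorem theoremD:
  fixes lam :: z2
  defines "f \<equiv> (\<lambda>x. z2_diff (z2_mult x x) lam)"
  shows
   "(lam \<in> z2_class 0 2 \<longrightarrow>
      (\<exists>p q. attracting_fixed_point f p \<and> p \<in> z2_class 0 2 \<and> basin f {p} = z2_class 0 1 \<and>
             attracting_fixed_point f q \<and> q \<in> z2_class 1 2 \<and> basin f {q} = z2_class 1 1))
  \<and> (lam \<in> z2_class 1 2 \<longrightarrow>
      (\<exists>a b. period2_orbit f a b \<and> a \<in> z2_class 0 2 \<and> b \<in> z2_class 3 2 \<and>
             (\<forall>x. attracted f {a, b} x)))
  \<and> (lam \<in> z2_class 2 2 \<longrightarrow>
      (\<exists>p q. attracting_fixed_point f p \<and> p \<in> z2_class 2 2 \<and> basin f {p} = z2_class 0 1 \<and>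
             attracting_fixed_point f q \<and> q \<in> z2_class 3 2 \<and> basin f {q} = z2_class 1 1))
  \<and> (lam \<in> z2_class 3 2 \<longrightarrow>
      (\<exists>a b. period2_orbit f a b \<and> a \<in> z2_class 1 2 \<and> b \<in> z2_class 2 2 \<and>
             (\<forall>x. attracted f {a, b} x)))"
proof -
  have "f = z2_sq_minus lam"
    unfolding f_def z2_sq_minus_def[abs_def] by simp
  then show ?thesis
    using sq_minus_attracting_fixed_points[of lam 0] sq_minus_attracting_fixed_points[of lam 2]
      sq_minus_attracting_2_cycle[of lam 1] sq_minus_attracting_2_cycle[of lam 3]
    by simp
qed

end
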